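(* Let $\mathbf C$ be a category of coframes and $(L,\nu_L)$ an adherence $\mathbf C$-object. (1) The quasi-closed elements of $L$ form a subcoframe of $L$ (closed under finite suprema and arbitrary infima). (2) The closed elements of $L$ form a sublattice of $L$ (closed under finite suprema and finite infima).
   Context: A category of coframes has coframes as objects and coframe morphisms. $\mathcal C_L$ is the set of complemented elements of $L$. An adherence $\mathbf C$-object is a $\mathbf C$-object $L$ with a monotone map $\nu_L:L\to L$ that preserves finite suprema of complemented elements and satisfies $\nu_L(\ell)=\bigwedge\{\nu_L(a):a\in\mathcal C_L,\ a\ge\ell\}$ for every $\ell\in L$. An element $c$ is quasi-closed if $\nu_L(c)\le c$, and closed if it is complemented and quasi-closed. *)

theory Defs
  imports Main
begin

definition coframe :: "'a::complete_lattice itself \<Rightarrow> bool" where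
  "coframe _ \<longleftrightarrow> (\<forall>(a::'a) S. sup a (Inf S) = (INF s\<in>S. sup a s))"

definition complemented_elems :: "'a::complete_lattice set" where
  "complemented_elems = {a. \<exists>b. inf a b = bot \<and> sup a b = top}"

definition adherence :: "('a::complete_lattice \<Rightarrow> 'a) \<Rightarrow> bool" where
  "adherence \<nu> \<longleftrightarrow>
     mono \<nu> \<and>
     \<nu> bot = bot \<and>
     (\<forall>a\<in>complemented_elems. \<forall>b\<in>complemented_elems. \<nu> (sup a b) = sup (\<nu> a) (\<nu> b)) \<and>
     (\<forall>l. \<nu> l = Inf {\<nu> a | a. a \<in> complemented_elems \<and> l \<le> a})"

definition quasi_closed :: "('a::complete_lattice \<Rightarrow> 'a) \<Rightarrow> 'a \<Rightarrow> bool" where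
  "quasi_closed \<nu> c \<longleftrightarrow> \<nu> c \<le> c"

definition closed_elem :: "('a::complete_lattice \<Rightarrow> 'a) \<Rightarrow> 'a \<Rightarrow> bool" where
  "closed_elem \<nu> c \<longleftrightarrow> c \<in> complemented_elems \<and> quasi_closed \<nu> c"

end

theory Submission
  imports Defs
begin

text \<open>
  In a coframe an adherence operator preserves all binary joins, not only those of complemented
  elements: \<open>\<nu> a \<squnion> \<nu> b\<close> is, by the coframe law applied twice, the meet of the elements
  \<open>\<nu> c \<squnion> \<nu> d = \<nu> (c \<squnion> d)\<close> over complemented \<open>c \<ge> a\<close> and \<open>d \<ge> b\<close>, each of which lies
  above \<open>\<nu> (a \<squnion> b)\<close>. Hence quasi-closed elements are closed under finite joins, while
  monotonicity alone makes them closed under arbitrary meets. Closed elements additionally use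
  that the complemented elements of a distributive lattice form a sublattice.
\<close>

lemma coframe_sup_Inf:
  assumes "coframe TYPE('a::complete_lattice)"
  shows "sup (a::'a) (Inf S) = (INF s\<in>S. sup a s)"
  using assms unfolding coframe_def by blast

lemma coframe_distrib_lattice:
  assumes "coframe TYPE('a::complete_lattice)"
  shows "class.distrib_lattice inf (\<le>) (<) (sup :: 'a \<Rightarrow> 'a \<Rightarrow> 'a)"
proof unfold_locales
  fix x y z :: 'a
  show "sup x (inf y z) = inf (sup x y) (sup x z)"
    using coframe_sup_Inf[OF assms, of x "{y, z}"] by simp
qed

lemma coframe_sup_Inf_Inf:
  assumes "coframe TYPE('a::complete_lattice)"
  shows "sup (Inf A) (Inf B :: 'a) = (INF x\<in>A. INF y\<in>B. sup x y)"
proof -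
  have "sup (Inf A) (Inf B) = (INF y\<in>B. sup (Inf A) y)"
    by (rule coframe_sup_Inf[OF assms])
  also have "\<dots> = (INF y\<in>B. INF x\<in>A. sup x y)"
  proof (rule INF_cong[OF refl])
    fix y
    have "sup (Inf A) y = (INF x\<in>A. sup y x)"
      by (subst sup_commute) (rule coframe_sup_Inf[OF assms])
    then show "sup (Inf A) y = (INF x\<in>A. sup x y)"
      by (simp add: sup_commute)
  qed
  also have "\<dots> = (INF x\<in>A. INF y\<in>B. sup x y)"
    by (rule INF_commute)
  finally show ?thesis .
qed

lemma complemented_elems_bot: "bot \<in> complemented_elems"
  and complemented_elems_top: "top \<in> complemented_elems"
  unfolding complemented_elems_def by auto

lemma complemented_elems_sup_inf:
  fixes a b :: "'a::complete_lattice"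
  assumes "class.distrib_lattice inf (\<le>) (<) (sup :: 'a \<Rightarrow> 'a \<Rightarrow> 'a)"
    and "a \<in> complemented_elems" "b \<in> complemented_elems"
  shows "sup a b \<in> complemented_elems" "inf a b \<in> complemented_elems"
proof -
  obtain a' where a': "inf a a' = bot" "sup a a' = top"
    using assms(2) unfolding complemented_elems_def by blast
  obtain b' where b': "inf b b' = bot" "sup b b' = top"
    using assms(3) unfolding complemented_elems_def by blast
  have "inf (sup a b) (inf a' b') = sup (inf a (inf a' b')) (inf b (inf a' b'))"
    by (rule distrib_lattice.inf_sup_distrib2[OF assms(1)])
  also have "\<dots> \<le> sup (inf a a') (inf b b')"
    by (simp add: le_infI2 le_supI1 le_supI2)
  finally have disjoint_sup: "inf (sup a b) (inf a' b') = bot"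
    using a' b' by (simp add: bot_unique)
  have "top \<le> inf (sup a a') (sup b b')"
    using a' b' by simp
  also have "\<dots> \<le> inf (sup (sup a b) a') (sup (sup a b) b')"
    by (simp add: le_supI1 le_supI2 le_infI1 le_infI2)
  also have "\<dots> = sup (sup a b) (inf a' b')"
    by (rule distrib_lattice.sup_inf_distrib1[OF assms(1), symmetric])
  finally have "top \<le> sup (sup a b) (inf a' b')" .
  with disjoint_sup show "sup a b \<in> complemented_elems"
    unfolding complemented_elems_def by (blast dest: top_le)
  have "inf (inf a b) (sup a' b') = sup (inf (inf a b) a') (inf (inf a b) b')"
    by (rule distrib_lattice.inf_sup_distrib1[OF assms(1)])
  also have "\<dots> \<le> sup (inf a a') (inf b b')"
    by (simp add: le_infI1 le_infI2 le_supI1 le_supI2)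
  finally have disjoint_inf: "inf (inf a b) (sup a' b') = bot"
    using a' b' by (simp add: bot_unique)
  have "top \<le> inf (sup a a') (sup b b')"
    using a' b' by simp
  also have "\<dots> \<le> inf (sup a (sup a' b')) (sup b (sup a' b'))"
    by (simp add: le_supI1 le_supI2 le_infI1 le_infI2)
  also have "\<dots> = sup (inf a b) (sup a' b')"
    by (rule distrib_lattice.sup_inf_distrib2[OF assms(1), symmetric])
  finally have "top \<le> sup (inf a b) (sup a' b')" .
  with disjoint_inf show "inf a b \<in> complemented_elems"
    unfolding complemented_elems_def by (blast dest: top_le)
qed

lemma adherence_sup:
  assumes coframe: "coframe TYPE('a::complete_lattice)"
    and "adherence (\<nu> :: 'a \<Rightarrow> 'a)"
  shows "\<nu> (sup a b) = sup (\<nu> a) (\<nu> b)"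
proof (rule antisym)
  have mono: "mono \<nu>"
    and sup_compl: "\<And>c d. c \<in> complemented_elems \<Longrightarrow> d \<in> complemented_elems \<Longrightarrow>
                      \<nu> (sup c d) = sup (\<nu> c) (\<nu> d)"
    and upper: "\<And>l. \<nu> l = Inf {\<nu> c | c. c \<in> complemented_elems \<and> l \<le> c}"
    using assms(2) unfolding adherence_def by blast+
  show "sup (\<nu> a) (\<nu> b) \<le> \<nu> (sup a b)"
    using mono by (simp add: monoD)
  define X where "X = {\<nu> c | c. c \<in> complemented_elems \<and> a \<le> c}"
  define Y where "Y = {\<nu> d | d. d \<in> complemented_elems \<and> b \<le> d}"
  have "\<nu> (sup a b) \<le> sup x y" if "x \<in> X" "y \<in> Y" for x y
  proof -
    obtain c where c: "x = \<nu> c" "c \<in> complemented_elems" "a \<le> c"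
      using \<open>x \<in> X\<close> unfolding X_def by blast
    obtain d where d: "y = \<nu> d" "d \<in> complemented_elems" "b \<le> d"
      using \<open>y \<in> Y\<close> unfolding Y_def by blast
    have "\<nu> (sup a b) \<le> \<nu> (sup c d)"
      using c d by (meson mono monoD sup_mono)
    also have "\<dots> = sup x y"
      using c d sup_compl by simp
    finally show ?thesis .
  qed
  then have "\<nu> (sup a b) \<le> (INF x\<in>X. INF y\<in>Y. sup x y)"
    by (simp add: le_INF_iff)
  also have "\<dots> = sup (Inf X) (Inf Y)"
    by (rule coframe_sup_Inf_Inf[OF coframe, symmetric])
  also have "\<dots> = sup (\<nu> a) (\<nu> b)"
    unfolding X_def Y_def upper[of a, symmetric] upper[of b, symmetric] ..
  finally show "\<nu> (sup a b) \<le> sup (\<nu> a) (\<nu> b)" .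
qed

lemma quasi_closed_Inf:
  assumes "mono \<nu>" and "\<forall>s\<in>S. quasi_closed \<nu> s"
  shows "quasi_closed \<nu> (Inf S)"
  unfolding quasi_closed_def
proof (rule Inf_greatest)
  fix s assume "s \<in> S"
  then have "\<nu> (Inf S) \<le> \<nu> s"
    using assms(1) by (simp add: Inf_lower monoD)
  also have "\<nu> s \<le> s"
    using assms(2) \<open>s \<in> S\<close> unfolding quasi_closed_def by blast
  finally show "\<nu> (Inf S) \<le> s" .
qed

lemma quasi_closed_inf:
  "mono \<nu> \<Longrightarrow> quasi_closed \<nu> a \<Longrightarrow> quasi_closed \<nu> b \<Longrightarrow> quasi_closed \<nu> (inf a b)"
  using quasi_closed_Inf[of \<nu> "{a, b}"] by simp

lemma quasi_closed_sup:
  assumes "coframe TYPE('a::complete_lattice)" and "adherence (\<nu> :: 'a \<Rightarrow> 'a)"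
    and "quasi_closed \<nu> a" "quasi_closed \<nu> b"
  shows "quasi_closed \<nu> (sup a b)"
proof -
  have "\<nu> (sup a b) = sup (\<nu> a) (\<nu> b)"
    by (rule adherence_sup[OF assms(1,2)])
  also have "\<dots> \<le> sup a b"
    using assms(3,4) unfolding quasi_closed_def by (rule sup_mono)
  finally show ?thesis
    unfolding quasi_closed_def .
qed

lemma closed_elem_sup:
  assumes "coframe TYPE('a::complete_lattice)" and "adherence (\<nu> :: 'a \<Rightarrow> 'a)"
    and "closed_elem \<nu> a" "closed_elem \<nu> b"
  shows "closed_elem \<nu> (sup a b)"
  using assms(3,4) complemented_elems_sup_inf(1)[OF coframe_distrib_lattice[OF assms(1)]]
    quasi_closed_sup[OF assms(1,2)]
  unfolding closed_elem_def by blast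

lemma closed_elem_inf:
  assumes "coframe TYPE('a::complete_lattice)" and "mono (\<nu> :: 'a \<Rightarrow> 'a)"
    and "closed_elem \<nu> a" "closed_elem \<nu> b"
  shows "closed_elem \<nu> (inf a b)"
  using assms(3,4) complemented_elems_sup_inf(2)[OF coframe_distrib_lattice[OF assms(1)]]
    quasi_closed_inf[OF assms(2)]
  unfolding closed_elem_def by blast

theorem mainTheorem20:
  fixes \<nu> :: "'a::complete_lattice \<Rightarrow> 'a"
  assumes "coframe TYPE('a)"
    and "adherence \<nu>"
  shows "(quasi_closed \<nu> bot
          \<and> (\<forall>a b. quasi_closed \<nu> a \<longrightarrow> quasi_closed \<nu> b \<longrightarrow> quasi_closed \<nu> (sup a b))
          \<and> (\<forall>S. (\<forall>s\<in>S. quasi_closed \<nu> s) \<longrightarrow> quasi_closed \<nu> (Inf S)))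
       \<and> (closed_elem \<nu> bot \<and> closed_elem \<nu> top
          \<and> (\<forall>a b. closed_elem \<nu> a \<longrightarrow> closed_elem \<nu> b \<longrightarrow> closed_elem \<nu> (sup a b))
          \<and> (\<forall>a b. closed_elem \<nu> a \<longrightarrow> closed_elem \<nu> b \<longrightarrow> closed_elem \<nu> (inf a b)))"
proof -
  have mono: "mono \<nu>" and bot: "\<nu> bot = bot"
    using assms(2) unfolding adherence_def by blast+
  have "closed_elem \<nu> bot" "closed_elem \<nu> top"
    using bot complemented_elems_bot complemented_elems_top
    unfolding closed_elem_def quasi_closed_def by simp_all
  moreover have "quasi_closed \<nu> bot"
    using bot unfolding quasi_closed_def by simp
  ultimately show ?thesis
    using quasi_closed_sup[OF assms] quasi_closed_Inf[OF mono]
      closed_elem_sup[OF assms] closed_elem_inf[OF assms(1) mono]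
    by blast
qed

end
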